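(* Assume that $\delta=\delta_1\cdots\delta_m$ is a permutation of length $m$ and $\pi=\pi_1\cdots\pi_n$ is a permutation of length $n$, disjoint from each other, where $\mathrm{des}(\delta) = r$ and $\mathrm{des}(\pi) = s$. Moreover, $\delta_1<\delta_2$ and all of the elements of $\delta$ are larger than the elements of $\pi$. Then \begin{align*} (1)\quad & \sum_{\substack{\alpha \in \mathrm{Sh}_l(\pi,\delta) \\ \mathrm{des}(\alpha) = d}} q^{\mathrm{maj}(\alpha)}= {m-r+s \brack d-r} {n-s+r-1\brack d-s-1} q^{\mathrm{maj}(\delta) + \mathrm{maj}(\pi) + (d - s)(d - r)}, \\ (2)\quad & \sum_{\substack{\alpha \in \mathrm{Sh}_{ls}(\pi,\delta) \\ \mathrm{des}(\alpha) = d}} q^{\mathrm{maj}(\alpha)}= {m-r+s-1 \brack d-r} {n-s+r-1\brack d-s-1} q^{\mathrm{maj}(\delta) + \mathrm{maj}(\pi) + (d - s)(d - r)}, \\ (3)\quad & \sum_{\substack{\alpha \in \mathrm{Sh}_{ll}(\pi,\delta) \\ \mathrm{des}(\alpha) = d}} q^{\mathrm{maj}(\alpha)}= {m-r+s-1 \brack d-r} {n-s+r-1\brack d-s-1} q^{\mathrm{maj}(\delta) + \mathrm{maj}(\pi) + (d- s+1)(d - r)}. \end{align*}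
   Context: A permutation of length $n$ here means a sequence of $n$ distinct integers (not necessarily $1,\dots,n$); two permutations are disjoint if they have no letters in common. For $\alpha=\alpha_1\cdots\alpha_n$, $\mathrm{Des}(\alpha)=\{i: \alpha_i>\alpha_{i+1}\}$, $\mathrm{des}(\alpha)=|\mathrm{Des}(\alpha)|$ and $\mathrm{maj}(\alpha)=\sum_{i\in\mathrm{Des}(\alpha)} i$. The Gaussian polynomial is ${n \brack m}=\frac{(1-q^n)(1-q^{n-1})\cdots (1-q^{n-m+1})}{(1-q^m)(1-q^{m-1})\cdots (1-q)}$. For disjoint permutations $\pi=\pi_1\cdots\pi_n$ and $\delta=\delta_1\cdots\delta_m$, a shuffle of $\pi$ and $\delta$ is a permutation $\alpha=\alpha_1\cdots\alpha_{m+n}$ containing both $\pi$ and $\delta$ as subsequences. $\mathrm{Sh}_l(\pi,\delta)$ is the set of shuffles with $\alpha_1=\delta_1$; $\mathrm{Sh}_{ls}(\pi,\delta)$ is the set of shuffles with $\alpha_1=\delta_1$ and $\alpha_{n+m}=\delta_m$ (the last letter of $\delta$); $\mathrm{Sh}_{ll}(\pi,\delta)$ is the set of shuffles with $\alpha_1=\delta_1$ and $\alpha_2=\delta_2$. *)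

theory Defs
  imports "HOL-Computational_Algebra.Polynomial"
begin

text \<open>Permutations are lists of distinct integers. Positions in the paper are 1-based:
  the 0-based list position i is a descent (at paper position i+1) iff xs!i > xs!(i+1).\<close>

definition Des :: "int list \<Rightarrow> nat set" where
  "Des xs = {i. 1 \<le> i \<and> i < length xs \<and> xs ! (i - 1) > xs ! i}"

definition des :: "int list \<Rightarrow> nat" where
  "des xs = card (Des xs)"

definition maj :: "int list \<Rightarrow> nat" where
  "maj xs = (\<Sum>i\<in>Des xs. i)"

abbreviation qvar :: "int poly" where
  "qvar \<equiv> [:0, 1:]"

text \<open>Gaussian polynomial [N brack K] as the (exact) polynomial quotient of the product
  formula; by convention it is 0 when K < 0.\<close>
definition gauss :: "int \<Rightarrow> int \<Rightarrow> int poly" where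
  "gauss N K = (if K < 0 then 0 else
     (\<Prod>i<nat K. (1 - qvar ^ nat (N - int i))) div (\<Prod>i\<in>{1..nat K}. (1 - qvar ^ i)))"

definition Sh_l :: "int list \<Rightarrow> int list \<Rightarrow> int list set" where
  "Sh_l p d = {a \<in> shuffles p d. a ! 0 = d ! 0}"

definition Sh_ls :: "int list \<Rightarrow> int list \<Rightarrow> int list set" where
  "Sh_ls p d = {a \<in> shuffles p d. a ! 0 = d ! 0 \<and> last a = last d}"

definition Sh_ll :: "int list \<Rightarrow> int list \<Rightarrow> int list set" where
  "Sh_ll p d = {a \<in> shuffles p d. a ! 0 = d ! 0 \<and> a ! 1 = d ! 1}"

end

(* Delete the last letter.  A shuffle in Sh_l(\<pi>, \<delta>) ends either with the last letter
   of \<delta> or with the last letter of \<pi>, and removing it leaves a shuffle in Sh_l of the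
   shortened pair.  As every letter of \<delta> exceeds every letter of \<pi>, whether the removed
   letter formed a descent depends only on which of the two words the new last letter
   belongs to.  Hence the maj-enumerators of the two kinds of shuffles (ending in \<delta>_m,
   ending in \<pi>_n) obey a pair of linear recurrences in m and n, and the q-Pascal rule
   shows that the two products of Gaussian polynomials in formula (2) and its companion
   solve them.  Formula (1) is their sum, and (3) is (1) for \<delta>_2...\<delta>_m multiplied by
   q^d: as \<delta>_1 < \<delta>_2, prefixing \<delta>_1 moves every descent one place to the right. *)
theory Submission
  imports Defs "HOL-Computational_Algebra.Polynomial_Factorial"
begin

section \<open>Gaussian polynomials\<close>

fun qbinom :: "nat \<Rightarrow> nat \<Rightarrow> int poly" where
  "qbinom n 0 = 1"
| "qbinom 0 (Suc k) = 0"
| "qbinom (Suc n) (Suc k) = qbinom n (Suc k) + qvar ^ (n - k) * qbinom n k"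

lemma qbinom_eq_0: "n < k \<Longrightarrow> qbinom n k = 0"
  by (induction n k rule: qbinom.induct) auto

lemma qbinom_diag: "qbinom n n = 1"
  by (induction n) (simp_all add: qbinom_eq_0)

lemma qbinom_mult_prod:
  "qbinom n k * (\<Prod>i\<in>{1..k}. 1 - qvar ^ i) = (\<Prod>i<k. 1 - qvar ^ (n - i))"
proof (induction n k rule: qbinom.induct)
  case (2 k)
  have "(\<Prod>i<Suc k. 1 - qvar ^ (0 - i)) = 0"
    by (rule prod_zero) auto
  then show ?case by simp
next
  case (3 n k)
  define P where "P = (\<Prod>i<k. 1 - qvar ^ (n - i) :: int poly)"
  define D where "D = (\<Prod>i\<in>{1..k}. 1 - qvar ^ i :: int poly)"
  have "qbinom (Suc n) (Suc k) * (\<Prod>i\<in>{1..Suc k}. 1 - qvar ^ i)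
      = qbinom n (Suc k) * (D * (1 - qvar ^ Suc k))
        + qvar ^ (n - k) * (qbinom n k * D) * (1 - qvar ^ Suc k)"
    by (simp add: D_def algebra_simps del: power_Suc)
  also have "\<dots> = P * (1 - qvar ^ (n - k)) + qvar ^ (n - k) * P * (1 - qvar ^ Suc k)"
    using 3 by (simp add: P_def D_def del: power_Suc)
  also have "\<dots> = (1 - qvar ^ Suc n) * P"
  proof (cases "k \<le> n")
    case True
    then have "qvar ^ (n - k) * qvar ^ Suc k = (qvar ^ Suc n :: int poly)"
      by (simp flip: power_add)
    then show ?thesis by (simp add: algebra_simps del: power_Suc)
  next
    case False
    then have "P = 0" unfolding P_def by (intro prod_zero bexI[of _ n]) auto
    then show ?thesis by simp
  qed
  also have "\<dots> = (\<Prod>i<Suc k. 1 - qvar ^ (Suc n - i))"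
    unfolding P_def prod.lessThan_Suc_shift by simp
  finally show ?case .
qed simp

lemma one_minus_qvar_power_nonzero: "0 < i \<Longrightarrow> 1 - qvar ^ i \<noteq> (0 :: int poly)"
proof
  assume "0 < i" "1 - qvar ^ i = (0 :: int poly)"
  then have "degree (qvar ^ i :: int poly) = 0" by (metis degree_1 eq_iff_diff_eq_0)
  with \<open>0 < i\<close> show False by (simp add: degree_power_eq)
qed

lemma gauss_of_nat: "gauss (int n) (int k) = qbinom n k"
proof -
  let ?D = "\<Prod>i\<in>{1..k}. 1 - qvar ^ i :: int poly"
  have "?D \<noteq> 0" using one_minus_qvar_power_nonzero by (simp del: power_Suc)
  moreover have "gauss (int n) (int k) = (qbinom n k * ?D) div ?D"
    unfolding gauss_def qbinom_mult_prod by (simp add: nat_minus_as_int del: power_Suc)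
  ultimately show ?thesis by simp
qed

lemma gauss_eq_qbinom: "0 \<le> N \<Longrightarrow> 0 \<le> K \<Longrightarrow> gauss N K = qbinom (nat N) (nat K)"
  using gauss_of_nat[of "nat N" "nat K"] by simp

lemma gauss_neg [simp]: "K < 0 \<Longrightarrow> gauss N K = 0"
  by (simp add: gauss_def)

lemma gauss_0_right [simp]: "gauss N 0 = 1"
  by (simp add: gauss_def)

lemma gauss_eq_0: "0 \<le> N \<Longrightarrow> N < K \<Longrightarrow> gauss N K = 0"
  by (simp add: gauss_eq_qbinom qbinom_eq_0)

lemma gauss_diag: "0 \<le> N \<Longrightarrow> gauss N N = 1"
  by (simp add: gauss_eq_qbinom qbinom_diag)

abbreviation qf :: "int poly fract" where
  "qf \<equiv> to_fract qvar"

lemma to_fract_power [simp]: "to_fract (x ^ n) = to_fract x ^ n"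
  by (induction n) simp_all

lemma qf_powi_add: "qf powi (a + b) = qf powi a * qf powi b"
  by (simp add: power_int_add)

lemma gauss_pascal:
  assumes "1 \<le> N"
  shows "to_fract (gauss N K)
    = to_fract (gauss (N - 1) K) + qf powi (N - K) * to_fract (gauss (N - 1) (K - 1))"
proof (cases "K \<le> 0")
  case True
  then show ?thesis by (cases "K = 0") (simp_all add: gauss_def)
next
  case False
  define n k where "n = nat (N - 1)" and "k = nat (K - 1)"
  have N: "N = int (Suc n)" and K: "K = int (Suc k)"
    using assms False by (simp_all add: n_def k_def)
  have g: "gauss N K = qbinom (Suc n) (Suc k)" "gauss (N - 1) K = qbinom n (Suc k)"
    "gauss (N - 1) (K - 1) = qbinom n k"
    unfolding N K by (simp_all add: gauss_eq_qbinom nat_add_distrib)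
  show ?thesis
  proof (cases "k \<le> n")
    case True
    then have "qf powi (N - K) = qf ^ (n - k)"
      by (simp add: N K power_int_of_nat flip: of_nat_diff)
    then show ?thesis by (simp add: g)
  next
    case False
    then show ?thesis by (simp add: g qbinom_eq_0)
  qed
qed

lemma to_fract_gauss_mult_qvar_power:
  assumes "0 \<le> K1 \<Longrightarrow> 0 \<le> K2 \<Longrightarrow> 0 \<le> e"
  shows "to_fract (gauss N1 K1 * gauss N2 K2 * qvar ^ (M + nat e))
    = qf ^ M * (to_fract (gauss N1 K1) * to_fract (gauss N2 K2) * qf powi e)"
proof (cases "0 \<le> K1 \<and> 0 \<le> K2")
  case True
  then have "qf powi e = qf ^ nat e"
    using assms by (simp add: power_int_def)
  then show ?thesis
    by (simp add: power_add)
qed auto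

section \<open>The closed forms\<close>

text \<open>The right-hand side of (2) without the factor q^(maj \<delta> + maj \<pi>), where m, n, r, s are
  the lengths and descent numbers of \<delta> and \<pi>, and its companion for shuffles ending with the
  last letter of \<pi>.  Exponents of q are integers, negative only where a Gaussian factor
  vanishes, so both live in the field of fractions of \<int>[q].\<close>
definition gf_ls :: "nat \<Rightarrow> nat \<Rightarrow> nat \<Rightarrow> nat \<Rightarrow> int \<Rightarrow> int poly fract" where
  "gf_ls m n r s d =
     to_fract (gauss (int m - int r + int s - 1) (d - int r))
   * to_fract (gauss (int n - int s + int r - 1) (d - int s - 1))
   * qf powi ((d - int s) * (d - int r))"

definition gf_lp :: "nat \<Rightarrow> nat \<Rightarrow> nat \<Rightarrow> nat \<Rightarrow> int \<Rightarrow> int poly fract" where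
  "gf_lp m n r s d =
     to_fract (gauss (int m - int r + int s - 1) (d - int r - 1))
   * to_fract (gauss (int n - int s + int r - 1) (d - int s - 1))
   * qf powi ((d - int s) * (d - int r) + int m + int s - d)"

lemma gf_ls_add_gf_lp:
  assumes "r < m"
  shows "gf_ls m n r s d + gf_lp m n r s d = gf_ls (Suc m) n r s d"
proof -
  have "to_fract (gauss (int m - int r + int s) (d - int r))
      = to_fract (gauss (int m - int r + int s - 1) (d - int r))
      + qf powi (int m - int r + int s - (d - int r))
        * to_fract (gauss (int m - int r + int s - 1) (d - int r - 1))"
    by (rule gauss_pascal) (use assms in simp)
  moreover have "qf powi ((d - int s) * (d - int r) + int m + int s - d)
      = qf powi ((d - int s) * (d - int r)) * qf powi (int m - int r + int s - (d - int r))"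
    by (simp flip: qf_powi_add add: algebra_simps)
  ultimately show ?thesis
    unfolding gf_ls_def gf_lp_def by (simp add: algebra_simps)
qed

lemma gf_lp_pascal:
  assumes "s < n"
  shows "qf ^ (m + n) * gf_ls m n r s (d - 1) + gf_lp m n r s d = gf_lp m (Suc n) r s d"
proof -
  have "to_fract (gauss (int n - int s + int r) (d - int s - 1))
      = to_fract (gauss (int n - int s + int r - 1) (d - int s - 1))
      + qf powi (int n - int s + int r - (d - int s - 1))
        * to_fract (gauss (int n - int s + int r - 1) (d - int s - 1 - 1))"
    by (rule gauss_pascal) (use assms in simp)
  moreover have "qf ^ (m + n) * qf powi ((d - 1 - int s) * (d - 1 - int r))
      = qf powi ((d - int s) * (d - int r) + int m + int s - d)
        * qf powi (int n - int s + int r - (d - int s - 1))"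
    by (simp flip: qf_powi_add power_int_of_nat add: algebra_simps)
  ultimately show ?thesis
    unfolding gf_ls_def gf_lp_def by (simp add: algebra_simps)
qed

lemma gf_ls_Suc_Suc_eq_gf_lp:
  "qf ^ m * gf_ls (Suc m) n (Suc r) s d = gf_lp m (Suc n) r s d"
proof -
  have "qf ^ m * qf powi ((d - int s) * (d - int (Suc r)))
      = qf powi ((d - int s) * (d - int r) + int m + int s - d)"
    by (simp flip: qf_powi_add power_int_of_nat add: algebra_simps)
  then show ?thesis
    unfolding gf_ls_def gf_lp_def by (simp add: algebra_simps)
qed

lemma gf_ls_pred_eq_gf_lp_Suc_Suc:
  "qf ^ (m + n) * gf_ls (Suc m) n r s (d - 1) = qf ^ n * gf_lp m (Suc n) r (Suc s) d"
proof -
  have "qf ^ (m + n) * qf powi ((d - 1 - int s) * (d - 1 - int r))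
      = qf ^ n * qf powi ((d - int (Suc s)) * (d - int r) + int m + int (Suc s) - d)"
    by (simp flip: qf_powi_add power_int_of_nat add: algebra_simps)
  then show ?thesis
    unfolding gf_ls_def gf_lp_def by (simp add: algebra_simps)
qed

lemma gf_ls_one: "gf_ls (Suc 0) n 0 s d = 0"
  by (cases "d \<le> int s") (simp_all add: gf_ls_def gauss_eq_0)

lemma gf_lp_one:
  assumes "r < m"
  shows "gf_lp m (Suc 0) r 0 d = (if d = int r + 1 then qf ^ m else 0)"
proof -
  consider "d \<le> int r" | "d = int r + 1" | "int r + 1 < d"
    by linarith
  then show ?thesis
  proof cases
    case 2
    then have "qf powi ((d - int 0) * (d - int r) + int m + int 0 - d) = qf ^ m"
      by (simp add: power_int_of_nat)
    with 2 assms show ?thesis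
      by (simp add: gf_lp_def gauss_diag)
  qed (simp_all add: gf_lp_def gauss_eq_0)
qed

lemma qf_power_mult_gf_ls:
  "qf ^ d * gf_ls m n r s (int d)
    = qf ^ r * (to_fract (gauss (int m - int r + int s - 1) (int d - int r))
      * to_fract (gauss (int n - int s + int r - 1) (int d - int s - 1))
      * qf powi ((int d - int s + 1) * (int d - int r)))"
proof -
  have "qf ^ d * qf powi ((int d - int s) * (int d - int r))
      = qf ^ r * qf powi ((int d - int s + 1) * (int d - int r))"
    by (simp flip: qf_powi_add power_int_of_nat add: algebra_simps)
  then show ?thesis
    unfolding gf_ls_def by (simp add: algebra_simps)
qed

section \<open>Descents and major index\<close>

lemma Des_subset: "Des xs \<subseteq> {1..<length xs}"
  by (auto simp: Des_def)

lemma finite_Des [simp]: "finite (Des xs)"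
  using Des_subset finite_subset by blast

lemma des_less_length: "xs \<noteq> [] \<Longrightarrow> des xs < length xs"
  using card_mono[OF _ Des_subset, of xs] by (cases xs) (auto simp: des_def)

lemma Des_singleton [simp]: "Des [x] = {}"
  by (simp add: Des_def)

lemma des_singleton [simp]: "des [x] = 0"
  by (simp add: des_def)

lemma maj_singleton [simp]: "maj [x] = 0"
  by (simp add: maj_def)

lemma Des_snoc:
  assumes "xs \<noteq> []"
  shows "Des (xs @ [z]) = Des xs \<union> (if z < last xs then {length xs} else {})"
proof (rule set_eqI)
  fix i
  show "i \<in> Des (xs @ [z]) \<longleftrightarrow> i \<in> Des xs \<union> (if z < last xs then {length xs} else {})"
    using assms by (cases "i < length xs"; cases "i = length xs")
      (auto simp: Des_def nth_append last_conv_nth Suc_le_eq)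
qed

lemma length_notin_Des: "length xs \<notin> Des xs"
  by (simp add: Des_def)

lemma des_snoc:
  "xs \<noteq> [] \<Longrightarrow> des (xs @ [z]) = des xs + (if z < last xs then 1 else 0)"
  by (simp add: des_def Des_snoc length_notin_Des)

lemma maj_snoc:
  "xs \<noteq> [] \<Longrightarrow> maj (xs @ [z]) = maj xs + (if z < last xs then length xs else 0)"
  by (simp add: maj_def Des_snoc length_notin_Des)

lemma Des_Cons:
  assumes "xs \<noteq> []" "a < hd xs"
  shows "Des (a # xs) = Suc ` Des xs"
proof (rule set_eqI)
  fix i
  show "i \<in> Des (a # xs) \<longleftrightarrow> i \<in> Suc ` Des xs"
    using assms by (cases i; cases "i = 1") (auto simp: Des_def hd_conv_nth image_iff)
qed

lemma des_Cons: "xs \<noteq> [] \<Longrightarrow> a < hd xs \<Longrightarrow> des (a # xs) = des xs"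
  by (simp add: des_def Des_Cons card_image)

lemma sum_Suc_eq_sum_plus_card: "sum Suc A = \<Sum>A + card (A :: nat set)"
  by (induction A rule: infinite_finite_induct) auto

lemma maj_Cons: "xs \<noteq> [] \<Longrightarrow> a < hd xs \<Longrightarrow> maj (a # xs) = maj xs + des xs"
  by (simp add: maj_def des_def Des_Cons sum.reindex sum_Suc_eq_sum_plus_card)

section \<open>Shuffles\<close>

lemma snoc_in_shuffles_leftI: "zs \<in> shuffles xs ys \<Longrightarrow> zs @ [z] \<in> shuffles (xs @ [z]) ys"
proof (induction xs ys arbitrary: zs rule: shuffles.induct)
  case (1 ys)
  then show ?case
    by (induction ys arbitrary: zs) (auto intro: Cons_in_shuffles_rightI)
qed (auto intro: Cons_in_shuffles_leftI Cons_in_shuffles_rightI)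

lemma snoc_in_shuffles_rightI: "zs \<in> shuffles xs ys \<Longrightarrow> zs @ [z] \<in> shuffles xs (ys @ [z])"
  using snoc_in_shuffles_leftI[of zs ys xs z] by (simp add: shuffles_commutes)

lemma rev_in_shuffles: "zs \<in> shuffles xs ys \<Longrightarrow> rev zs \<in> shuffles (rev xs) (rev ys)"
  by (induction xs ys arbitrary: zs rule: shuffles.induct)
    (auto intro!: snoc_in_shuffles_leftI snoc_in_shuffles_rightI)

lemma rev_in_shuffles_iff: "rev zs \<in> shuffles (rev xs) (rev ys) \<longleftrightarrow> zs \<in> shuffles xs ys"
  using rev_in_shuffles[of "rev zs" "rev xs" "rev ys"] rev_in_shuffles[of zs xs ys] by auto

lemma snoc_in_shuffles_iff:
  "zs @ [z] \<in> shuffles xs ys \<longleftrightarrow>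
    xs \<noteq> [] \<and> last xs = z \<and> zs \<in> shuffles (butlast xs) ys \<or>
    ys \<noteq> [] \<and> last ys = z \<and> zs \<in> shuffles xs (butlast ys)"
proof -
  have tl_rev: "tl (rev xs) = rev (butlast xs)" for xs :: "'a list"
    by (metis butlast_rev rev_rev_ident)
  show ?thesis
    using rev_in_shuffles_iff[of "zs @ [z]" xs ys]
    by (simp add: Cons_in_shuffles_iff hd_rev tl_rev rev_in_shuffles_iff)
qed

lemma last_in_shuffles:
  "zs \<in> shuffles xs ys \<Longrightarrow> zs \<noteq> [] \<Longrightarrow>
    xs \<noteq> [] \<and> last zs = last xs \<or> ys \<noteq> [] \<and> last zs = last ys"
  using snoc_in_shuffles_iff[of "butlast zs" "last zs" xs ys] by auto

lemma shuffles_snoc_right: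
  assumes "z \<notin> set xs"
  shows "{zs \<in> shuffles xs (ys @ [z]). last zs = z} = (\<lambda>zs. zs @ [z]) ` shuffles xs ys"
proof (intro equalityI subsetI)
  fix zs assume zs: "zs \<in> {zs \<in> shuffles xs (ys @ [z]). last zs = z}"
  then have "zs \<noteq> []" and "last zs = z" by auto
  then have zs_eq: "zs = butlast zs @ [z]"
    by (metis append_butlast_last_id)
  moreover have "\<not> (xs \<noteq> [] \<and> last xs = z)"
    using assms last_in_set by blast
  moreover have "butlast zs @ [z] \<in> shuffles xs (ys @ [z])"
    using zs zs_eq by simp
  ultimately have "butlast zs \<in> shuffles xs ys"
    unfolding snoc_in_shuffles_iff by auto
  with zs_eq show "zs \<in> (\<lambda>zs. zs @ [z]) ` shuffles xs ys"
    by (metis image_eqI)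
next
  fix zs assume "zs \<in> (\<lambda>zs. zs @ [z]) ` shuffles xs ys"
  then obtain \<beta> where "zs = \<beta> @ [z]" "\<beta> \<in> shuffles xs ys" by blast
  then show "zs \<in> {zs \<in> shuffles xs (ys @ [z]). last zs = z}"
    using snoc_in_shuffles_rightI by fastforce
qed

lemma shuffles_snoc_left:
  "z \<notin> set ys \<Longrightarrow> {zs \<in> shuffles (xs @ [z]) ys. last zs = z} = (\<lambda>zs. zs @ [z]) ` shuffles xs ys"
  using shuffles_snoc_right[of z ys xs] by (simp add: shuffles_commutes)

definition Sh_lp :: "int list \<Rightarrow> int list \<Rightarrow> int list set" where
  "Sh_lp \<pi> \<delta> = {\<alpha> \<in> shuffles \<pi> \<delta>. \<alpha> ! 0 = \<delta> ! 0 \<and> last \<alpha> = last \<pi>}"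

lemma finite_Sh_ls [simp]: "finite (Sh_ls \<pi> \<delta>)"
  by (simp add: Sh_ls_def)

lemma finite_Sh_lp [simp]: "finite (Sh_lp \<pi> \<delta>)"
  by (simp add: Sh_lp_def)

lemma Sh_l_memD: "\<beta> \<in> Sh_l \<pi> \<delta> \<Longrightarrow> \<delta> \<noteq> [] \<Longrightarrow> \<beta> \<noteq> [] \<and> hd \<beta> = hd \<delta>"
  by (cases \<beta>; cases \<delta>) (auto simp: Sh_l_def)

lemma Sh_ls_memD: "\<beta> \<in> Sh_ls \<pi> \<delta> \<Longrightarrow> \<delta> \<noteq> [] \<Longrightarrow>
    \<beta> \<noteq> [] \<and> length \<beta> = length \<pi> + length \<delta> \<and> last \<beta> = last \<delta>"
  by (auto simp: Sh_ls_def length_shuffles)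

lemma Sh_lp_memD: "\<beta> \<in> Sh_lp \<pi> \<delta> \<Longrightarrow> \<delta> \<noteq> [] \<Longrightarrow>
    \<beta> \<noteq> [] \<and> length \<beta> = length \<pi> + length \<delta> \<and> last \<beta> = last \<pi>"
  by (auto simp: Sh_lp_def length_shuffles)

lemma Sh_l_eq_Un: "\<pi> \<noteq> [] \<Longrightarrow> Sh_l \<pi> \<delta> = Sh_ls \<pi> \<delta> \<union> Sh_lp \<pi> \<delta>"
proof -
  assume "\<pi> \<noteq> []"
  then have "last \<alpha> = last \<pi> \<or> last \<alpha> = last \<delta>" if "\<alpha> \<in> shuffles \<pi> \<delta>" for \<alpha>
  proof -
    have "\<alpha> \<noteq> []" using that \<open>\<pi> \<noteq> []\<close> by auto
    then show ?thesis using last_in_shuffles[OF that] by auto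
  qed
  then show ?thesis
    by (auto simp: Sh_l_def Sh_ls_def Sh_lp_def)
qed

lemma Sh_ls_Int_Sh_lp: "last \<pi> \<noteq> last \<delta> \<Longrightarrow> Sh_ls \<pi> \<delta> \<inter> Sh_lp \<pi> \<delta> = {}"
  by (auto simp: Sh_ls_def Sh_lp_def)

lemma Sh_ls_snoc:
  assumes "\<delta> \<noteq> []" "z \<notin> set \<pi>"
  shows "Sh_ls \<pi> (\<delta> @ [z]) = (\<lambda>\<beta>. \<beta> @ [z]) ` Sh_l \<pi> \<delta>"
proof -
  have "Sh_ls \<pi> (\<delta> @ [z]) = {\<alpha> \<in> (\<lambda>\<beta>. \<beta> @ [z]) ` shuffles \<pi> \<delta>. \<alpha> ! 0 = \<delta> ! 0}"
    using assms shuffles_snoc_right[OF assms(2), of \<delta>, symmetric] by (auto simp: Sh_ls_def nth_append)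
  also have "\<dots> = (\<lambda>\<beta>. \<beta> @ [z]) ` Sh_l \<pi> \<delta>"
    using assms(1) by (auto simp: Sh_l_def nth_append split: if_splits)
  finally show ?thesis .
qed

lemma Sh_lp_snoc:
  assumes "\<delta> \<noteq> []" "y \<notin> set \<delta>"
  shows "Sh_lp (\<pi> @ [y]) \<delta> = (\<lambda>\<beta>. \<beta> @ [y]) ` Sh_l \<pi> \<delta>"
proof -
  have "Sh_lp (\<pi> @ [y]) \<delta> = {\<alpha> \<in> (\<lambda>\<beta>. \<beta> @ [y]) ` shuffles \<pi> \<delta>. \<alpha> ! 0 = \<delta> ! 0}"
    using shuffles_snoc_left[OF assms(2), of \<pi>, symmetric] by (auto simp: Sh_lp_def)
  also have "\<dots> = (\<lambda>\<beta>. \<beta> @ [y]) ` Sh_l \<pi> \<delta>"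
    using assms(1) by (auto simp: Sh_l_def nth_append split: if_splits)
  finally show ?thesis .
qed

lemma Sh_lp_single: "\<delta> \<noteq> [] \<Longrightarrow> y \<notin> set \<delta> \<Longrightarrow> Sh_lp [y] \<delta> = {\<delta> @ [y]}"
  using Sh_lp_snoc[of \<delta> y "[]"] by (auto simp: Sh_l_def)

lemma Sh_ls_single:
  assumes "\<pi> \<noteq> []" "z \<notin> set \<pi>"
  shows "Sh_ls \<pi> [z] = {}"
proof -
  have "\<alpha> = \<pi> @ [z]" if "\<alpha> \<in> shuffles \<pi> [z]" "last \<alpha> = z" for \<alpha>
  proof -
    have "\<alpha> \<in> {\<alpha> \<in> shuffles \<pi> ([] @ [z]). last \<alpha> = z}"
      using that by simp
    then show ?thesis
      unfolding shuffles_snoc_right[OF assms(2)] by simp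
  qed
  moreover have "(\<pi> @ [z]) ! 0 \<noteq> z"
    using assms by (cases \<pi>) auto
  ultimately show ?thesis
    unfolding Sh_ls_def by fastforce
qed

lemma Sh_ll_Cons:
  assumes "a \<notin> set \<pi>"
  shows "Sh_ll \<pi> (a # \<delta>) = (#) a ` Sh_l \<pi> \<delta>"
proof (intro equalityI subsetI)
  fix \<alpha> assume \<alpha>: "\<alpha> \<in> Sh_ll \<pi> (a # \<delta>)"
  then have "\<alpha> \<noteq> []" and "\<alpha> ! 0 = a"
    by (auto simp: Sh_ll_def)
  then obtain \<beta> where \<beta>: "\<alpha> = a # \<beta>"
    by (cases \<alpha>) auto
  have "\<not> (\<pi> \<noteq> [] \<and> hd \<pi> = a)"
    using assms hd_in_set by blast
  moreover have "a # \<beta> \<in> shuffles \<pi> (a # \<delta>)" and "\<beta> ! 0 = \<delta> ! 0"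
    using \<alpha> \<beta> by (simp_all add: Sh_ll_def)
  ultimately have "\<beta> \<in> Sh_l \<pi> \<delta>"
    unfolding Sh_l_def Cons_in_shuffles_iff by auto
  with \<beta> show "\<alpha> \<in> (#) a ` Sh_l \<pi> \<delta>" by blast
next
  fix \<alpha> assume "\<alpha> \<in> (#) a ` Sh_l \<pi> \<delta>"
  then obtain \<beta> where "\<alpha> = a # \<beta>" "\<beta> \<in> shuffles \<pi> \<delta>" "\<beta> ! 0 = \<delta> ! 0"
    by (auto simp: Sh_l_def)
  then show "\<alpha> \<in> Sh_ll \<pi> (a # \<delta>)"
    by (simp add: Sh_ll_def Cons_in_shuffles_rightI)
qed

section \<open>Enumeration by descents and major index\<close>

definition maj_gf :: "int list set \<Rightarrow> int \<Rightarrow> int poly" where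
  "maj_gf A d = (\<Sum>\<alpha>\<in>{\<alpha> \<in> A. int (des \<alpha>) = d}. qvar ^ maj \<alpha>)"

lemma maj_gf_Un:
  assumes "finite A" "finite B" "A \<inter> B = {}"
  shows "maj_gf (A \<union> B) d = maj_gf A d + maj_gf B d"
proof -
  have "{\<alpha> \<in> A \<union> B. int (des \<alpha>) = d} = {\<alpha> \<in> A. int (des \<alpha>) = d} \<union> {\<alpha> \<in> B. int (des \<alpha>) = d}"
    by blast
  with assms show ?thesis
    unfolding maj_gf_def by (simp add: sum.union_disjoint disjoint_iff)
qed

lemma maj_gf_singleton: "maj_gf {\<alpha>} d = (if int (des \<alpha>) = d then qvar ^ maj \<alpha> else 0)"
proof -
  have "{\<beta> \<in> {\<alpha>}. int (des \<beta>) = d} = (if int (des \<alpha>) = d then {\<alpha>} else {})"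
    by auto
  then show ?thesis
    by (simp add: maj_gf_def)
qed

lemma maj_gf_snoc_descent:
  assumes "\<And>\<beta>. \<beta> \<in> A \<Longrightarrow> \<beta> \<noteq> [] \<and> length \<beta> = L \<and> z < last \<beta>"
  shows "maj_gf ((\<lambda>\<beta>. \<beta> @ [z]) ` A) d = qvar ^ L * maj_gf A (d - 1)"
proof -
  have "{\<alpha> \<in> (\<lambda>\<beta>. \<beta> @ [z]) ` A. int (des \<alpha>) = d} = (\<lambda>\<beta>. \<beta> @ [z]) ` {\<beta> \<in> A. int (des \<beta>) = d - 1}"
    using assms by (force simp: des_snoc)
  moreover have "inj_on (\<lambda>\<beta>. \<beta> @ [z]) B" for B
    by (simp add: inj_on_def)
  ultimately show ?thesis
    using assms by (simp add: maj_gf_def sum.reindex sum_distrib_left maj_snoc power_add mult_ac)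
qed

lemma maj_gf_snoc_ascent:
  assumes "\<And>\<beta>. \<beta> \<in> A \<Longrightarrow> \<beta> \<noteq> [] \<and> \<not> z < last \<beta>"
  shows "maj_gf ((\<lambda>\<beta>. \<beta> @ [z]) ` A) d = maj_gf A d"
proof -
  have "{\<alpha> \<in> (\<lambda>\<beta>. \<beta> @ [z]) ` A. int (des \<alpha>) = d} = (\<lambda>\<beta>. \<beta> @ [z]) ` {\<beta> \<in> A. int (des \<beta>) = d}"
    using assms by (force simp: des_snoc)
  moreover have "inj_on (\<lambda>\<beta>. \<beta> @ [z]) B" for B
    by (simp add: inj_on_def)
  ultimately show ?thesis
    using assms by (simp add: maj_gf_def sum.reindex maj_snoc)
qed

lemma maj_gf_Cons:
  assumes "\<And>\<beta>. \<beta> \<in> A \<Longrightarrow> \<beta> \<noteq> [] \<and> a < hd \<beta>" "0 \<le> d"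
  shows "maj_gf ((#) a ` A) d = qvar ^ nat d * maj_gf A d"
proof -
  have "{\<alpha> \<in> (#) a ` A. int (des \<alpha>) = d} = (#) a ` {\<beta> \<in> A. int (des \<beta>) = d}"
    using assms(1) by (force simp: des_Cons)
  then show ?thesis
    using assms by (auto simp: maj_gf_def sum.reindex sum_distrib_left maj_Cons power_add mult_ac
        intro!: sum.cong)
qed

lemma maj_gf_snoc_Sh_l:
  assumes "\<pi> \<noteq> []" "last \<pi> \<noteq> last \<delta>"
  shows "maj_gf ((\<lambda>\<beta>. \<beta> @ [z]) ` Sh_l \<pi> \<delta>) d
    = maj_gf ((\<lambda>\<beta>. \<beta> @ [z]) ` Sh_ls \<pi> \<delta>) d + maj_gf ((\<lambda>\<beta>. \<beta> @ [z]) ` Sh_lp \<pi> \<delta>) d"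
proof -
  have "inj (\<lambda>\<beta>. \<beta> @ [z])"
    by (simp add: inj_def)
  then have "(\<lambda>\<beta>. \<beta> @ [z]) ` Sh_ls \<pi> \<delta> \<inter> (\<lambda>\<beta>. \<beta> @ [z]) ` Sh_lp \<pi> \<delta> = {}"
    using Sh_ls_Int_Sh_lp[OF assms(2)] by (simp flip: image_Int)
  then show ?thesis
    by (simp add: Sh_l_eq_Un[OF assms(1)] image_Un maj_gf_Un)
qed

lemma maj_gf_Sh_ls_snoc:
  assumes "\<pi> \<noteq> []" "\<delta> \<noteq> []" "\<forall>u\<in>set (\<delta> @ [z]). \<forall>v\<in>set \<pi>. v < u"
  shows "maj_gf (Sh_ls \<pi> (\<delta> @ [z])) d =
    (if z < last \<delta> then qvar ^ (length \<pi> + length \<delta>) * maj_gf (Sh_ls \<pi> \<delta>) (d - 1)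
     else maj_gf (Sh_ls \<pi> \<delta>) d) + maj_gf (Sh_lp \<pi> \<delta>) d"
proof -
  have "z \<notin> set \<pi>" "last \<pi> < z" "last \<pi> < last \<delta>"
    using assms by auto
  then show ?thesis
    using assms(1,2) Sh_ls_memD[OF _ assms(2)] Sh_lp_memD[OF _ assms(2)]
    by (simp add: Sh_ls_snoc maj_gf_snoc_Sh_l maj_gf_snoc_descent maj_gf_snoc_ascent)
qed

lemma maj_gf_Sh_lp_snoc:
  assumes "\<pi> \<noteq> []" "\<delta> \<noteq> []" "\<forall>u\<in>set \<delta>. \<forall>v\<in>set (\<pi> @ [y]). v < u"
  shows "maj_gf (Sh_lp (\<pi> @ [y]) \<delta>) d =
    qvar ^ (length \<pi> + length \<delta>) * maj_gf (Sh_ls \<pi> \<delta>) (d - 1) +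
    (if y < last \<pi> then qvar ^ (length \<pi> + length \<delta>) * maj_gf (Sh_lp \<pi> \<delta>) (d - 1)
     else maj_gf (Sh_lp \<pi> \<delta>) d)"
proof -
  have "y \<notin> set \<delta>" "y < last \<delta>" "last \<pi> < last \<delta>"
    using assms by auto
  then show ?thesis
    using assms(1,2) Sh_ls_memD[OF _ assms(2)] Sh_lp_memD[OF _ assms(2)]
    by (simp add: Sh_lp_snoc maj_gf_snoc_Sh_l maj_gf_snoc_descent maj_gf_snoc_ascent)
qed

lemma maj_gf_Sh_ll_Cons:
  assumes "\<delta> \<noteq> []" "a \<notin> set \<pi>" "a < hd \<delta>" "0 \<le> d"
  shows "maj_gf (Sh_ll \<pi> (a # \<delta>)) d = qvar ^ nat d * maj_gf (Sh_l \<pi> \<delta>) d"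
  using assms Sh_l_memD[OF _ assms(1)] by (simp add: Sh_ll_Cons maj_gf_Cons)

section \<open>Solving the recurrences\<close>

lemma gf_Sh_ls_single:
  assumes "\<pi> \<noteq> []" "\<forall>v\<in>set \<pi>. v < z"
  shows "to_fract (maj_gf (Sh_ls \<pi> [z]) d)
    = qf ^ (maj [z] + maj \<pi>) * gf_ls (length [z]) (length \<pi>) (des [z]) (des \<pi>) d"
proof -
  have "z \<notin> set \<pi>" using assms(2) by auto
  then show ?thesis
    using assms(1) by (simp add: Sh_ls_single maj_gf_def gf_ls_one)
qed

lemma gf_Sh_lp_single:
  assumes "\<delta> \<noteq> []" "\<forall>u\<in>set \<delta>. y < u"
  shows "to_fract (maj_gf (Sh_lp [y] \<delta>) d)
    = qf ^ (maj \<delta> + maj [y]) * gf_lp (length \<delta>) (length [y]) (des \<delta>) (des [y]) d"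
proof -
  have "y \<notin> set \<delta>" "y < last \<delta>" using assms by auto
  then have "maj_gf (Sh_lp [y] \<delta>) d = qvar ^ length \<delta> * maj_gf {\<delta>} (d - 1)"
    using assms(1) by (simp add: Sh_lp_single maj_gf_snoc_descent[where A = "{\<delta>}", simplified])
  then show ?thesis
    using des_less_length[OF assms(1)]
    by (auto simp: maj_gf_singleton gf_lp_one power_add)
qed

lemma gf_Sh_ls_snoc:
  assumes "\<pi> \<noteq> []" "\<delta> \<noteq> []" "\<forall>u\<in>set (\<delta> @ [z]). \<forall>v\<in>set \<pi>. v < u"
    and ls: "\<And>e. to_fract (maj_gf (Sh_ls \<pi> \<delta>) e)
      = qf ^ (maj \<delta> + maj \<pi>) * gf_ls (length \<delta>) (length \<pi>) (des \<delta>) (des \<pi>) e"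
    and lp: "\<And>e. to_fract (maj_gf (Sh_lp \<pi> \<delta>) e)
      = qf ^ (maj \<delta> + maj \<pi>) * gf_lp (length \<delta>) (length \<pi>) (des \<delta>) (des \<pi>) e"
  shows "to_fract (maj_gf (Sh_ls \<pi> (\<delta> @ [z])) d)
    = qf ^ (maj (\<delta> @ [z]) + maj \<pi>) * gf_ls (length (\<delta> @ [z])) (length \<pi>) (des (\<delta> @ [z])) (des \<pi>) d"
proof -
  let ?m = "length \<delta>" and ?n = "length \<pi>" and ?r = "des \<delta>" and ?s = "des \<pi>"
  let ?M = "maj \<delta> + maj \<pi>"
  show ?thesis
  proof (cases "z < last \<delta>")
    case True
    have "to_fract (maj_gf (Sh_ls \<pi> (\<delta> @ [z])) d)
        = qf ^ ?M * (qf ^ (?m + ?n) * gf_ls ?m ?n ?r ?s (d - 1) + gf_lp ?m ?n ?r ?s d)"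
      using True by (simp add: maj_gf_Sh_ls_snoc[OF assms(1-3)] ls lp algebra_simps)
    also have "\<dots> = qf ^ ?M * (qf ^ ?m * gf_ls (Suc ?m) ?n (Suc ?r) ?s d)"
      by (simp add: gf_lp_pascal des_less_length[OF assms(1)] gf_ls_Suc_Suc_eq_gf_lp)
    finally show ?thesis
      using True by (simp add: des_snoc[OF assms(2)] maj_snoc[OF assms(2)] power_add mult_ac)
  next
    case False
    have "to_fract (maj_gf (Sh_ls \<pi> (\<delta> @ [z])) d)
        = qf ^ ?M * (gf_ls ?m ?n ?r ?s d + gf_lp ?m ?n ?r ?s d)"
      using False by (simp add: maj_gf_Sh_ls_snoc[OF assms(1-3)] ls lp algebra_simps)
    also have "\<dots> = qf ^ ?M * gf_ls (Suc ?m) ?n ?r ?s d"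
      by (simp add: gf_ls_add_gf_lp des_less_length[OF assms(2)])
    finally show ?thesis
      using False by (simp add: des_snoc[OF assms(2)] maj_snoc[OF assms(2)])
  qed
qed

lemma gf_Sh_lp_snoc:
  assumes "\<pi> \<noteq> []" "\<delta> \<noteq> []" "\<forall>u\<in>set \<delta>. \<forall>v\<in>set (\<pi> @ [y]). v < u"
    and ls: "\<And>e. to_fract (maj_gf (Sh_ls \<pi> \<delta>) e)
      = qf ^ (maj \<delta> + maj \<pi>) * gf_ls (length \<delta>) (length \<pi>) (des \<delta>) (des \<pi>) e"
    and lp: "\<And>e. to_fract (maj_gf (Sh_lp \<pi> \<delta>) e)
      = qf ^ (maj \<delta> + maj \<pi>) * gf_lp (length \<delta>) (length \<pi>) (des \<delta>) (des \<pi>) e"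
  shows "to_fract (maj_gf (Sh_lp (\<pi> @ [y]) \<delta>) d)
    = qf ^ (maj \<delta> + maj (\<pi> @ [y])) * gf_lp (length \<delta>) (length (\<pi> @ [y])) (des \<delta>) (des (\<pi> @ [y])) d"
proof -
  let ?m = "length \<delta>" and ?n = "length \<pi>" and ?r = "des \<delta>" and ?s = "des \<pi>"
  let ?M = "maj \<delta> + maj \<pi>"
  show ?thesis
  proof (cases "y < last \<pi>")
    case True
    have "to_fract (maj_gf (Sh_lp (\<pi> @ [y]) \<delta>) d)
        = qf ^ ?M * (qf ^ (?m + ?n) * (gf_ls ?m ?n ?r ?s (d - 1) + gf_lp ?m ?n ?r ?s (d - 1)))"
      using True by (simp add: maj_gf_Sh_lp_snoc[OF assms(1-3)] ls lp algebra_simps)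
    also have "\<dots> = qf ^ ?M * (qf ^ ?n * gf_lp ?m (Suc ?n) ?r (Suc ?s) d)"
      by (simp add: gf_ls_add_gf_lp des_less_length[OF assms(2)] gf_ls_pred_eq_gf_lp_Suc_Suc)
    finally show ?thesis
      using True by (simp add: des_snoc[OF assms(1)] maj_snoc[OF assms(1)] power_add mult_ac)
  next
    case False
    have "to_fract (maj_gf (Sh_lp (\<pi> @ [y]) \<delta>) d)
        = qf ^ ?M * (qf ^ (?m + ?n) * gf_ls ?m ?n ?r ?s (d - 1) + gf_lp ?m ?n ?r ?s d)"
      using False by (simp add: maj_gf_Sh_lp_snoc[OF assms(1-3)] ls lp algebra_simps)
    also have "\<dots> = qf ^ ?M * gf_lp ?m (Suc ?n) ?r ?s d"
      by (simp add: gf_lp_pascal des_less_length[OF assms(1)])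
    finally show ?thesis
      using False by (simp add: des_snoc[OF assms(1)] maj_snoc[OF assms(1)])
  qed
qed

lemma gf_Sh_ls_Sh_lp:
  assumes "\<pi> \<noteq> []" "\<delta> \<noteq> []" "\<forall>u\<in>set \<delta>. \<forall>v\<in>set \<pi>. v < u"
  shows "to_fract (maj_gf (Sh_ls \<pi> \<delta>) d)
      = qf ^ (maj \<delta> + maj \<pi>) * gf_ls (length \<delta>) (length \<pi>) (des \<delta>) (des \<pi>) d
    \<and> to_fract (maj_gf (Sh_lp \<pi> \<delta>) d)
      = qf ^ (maj \<delta> + maj \<pi>) * gf_lp (length \<delta>) (length \<pi>) (des \<delta>) (des \<pi>) d"
  using assms
proof (induction "length \<pi> + length \<delta>" arbitrary: \<pi> \<delta> d rule: less_induct)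
  case less
  have "to_fract (maj_gf (Sh_ls \<pi> \<delta>) d)
      = qf ^ (maj \<delta> + maj \<pi>) * gf_ls (length \<delta>) (length \<pi>) (des \<delta>) (des \<pi>) d"
  proof (cases \<delta> rule: rev_cases)
    case (snoc \<delta>' z)
    show ?thesis
    proof (cases "\<delta>' = []")
      case True
      then show ?thesis using less.prems snoc gf_Sh_ls_single by simp
    next
      case False
      then show ?thesis
        using less.prems less.hyps[of \<pi> \<delta>'] snoc by (simp add: gf_Sh_ls_snoc)
    qed
  qed (use less.prems in simp)
  moreover have "to_fract (maj_gf (Sh_lp \<pi> \<delta>) d)
      = qf ^ (maj \<delta> + maj \<pi>) * gf_lp (length \<delta>) (length \<pi>) (des \<delta>) (des \<pi>) d"
  proof (cases \<pi> rule: rev_cases)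
    case (snoc \<pi>' y)
    show ?thesis
    proof (cases "\<pi>' = []")
      case True
      then show ?thesis using less.prems snoc gf_Sh_lp_single by simp
    next
      case False
      then show ?thesis
        using less.prems less.hyps[of \<pi>' \<delta>] snoc by (simp add: gf_Sh_lp_snoc)
    qed
  qed (use less.prems in simp)
  ultimately show ?case ..
qed

lemma gf_Sh_l:
  assumes "\<pi> \<noteq> []" "\<delta> \<noteq> []" "\<forall>u\<in>set \<delta>. \<forall>v\<in>set \<pi>. v < u"
  shows "to_fract (maj_gf (Sh_l \<pi> \<delta>) d)
    = qf ^ (maj \<delta> + maj \<pi>) * gf_ls (Suc (length \<delta>)) (length \<pi>) (des \<delta>) (des \<pi>) d"
proof -
  have "last \<pi> \<noteq> last \<delta>"
    using assms by (metis last_in_set less_irrefl)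
  then have "maj_gf (Sh_l \<pi> \<delta>) d = maj_gf (Sh_ls \<pi> \<delta>) d + maj_gf (Sh_lp \<pi> \<delta>) d"
    by (simp add: Sh_l_eq_Un[OF assms(1)] maj_gf_Un Sh_ls_Int_Sh_lp)
  then show ?thesis
    using gf_Sh_ls_Sh_lp[OF assms] des_less_length[OF assms(2)]
    by (simp flip: gf_ls_add_gf_lp add: distrib_left)
qed

lemma maj_gf_Sh_l_closed_form:
  assumes "\<pi> \<noteq> []" "\<delta> \<noteq> []" "\<forall>u\<in>set \<delta>. \<forall>v\<in>set \<pi>. v < u"
    and "m = length \<delta>" "n = length \<pi>" "r = des \<delta>" "s = des \<pi>"
  shows "maj_gf (Sh_l \<pi> \<delta>) (int d) =
    gauss (int m - int r + int s) (int d - int r) * gauss (int n - int s + int r - 1) (int d - int s - 1)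
    * qvar ^ (maj \<delta> + maj \<pi> + nat ((int d - int s) * (int d - int r)))"
proof (rule to_fract_eq_iff[THEN iffD1])
  have nonneg: "0 \<le> int d - int r \<Longrightarrow> 0 \<le> int d - int s - 1 \<Longrightarrow> 0 \<le> (int d - int s) * (int d - int r)"
    by simp
  have "to_fract (maj_gf (Sh_l \<pi> \<delta>) (int d)) = qf ^ (maj \<delta> + maj \<pi>) *
      (to_fract (gauss (int m - int r + int s) (int d - int r))
      * to_fract (gauss (int n - int s + int r - 1) (int d - int s - 1))
      * qf powi ((int d - int s) * (int d - int r)))"
    using gf_Sh_l[OF assms(1-3)] assms(4-7) by (simp add: gf_ls_def algebra_simps)
  then show "to_fract (maj_gf (Sh_l \<pi> \<delta>) (int d)) = to_fract
    (gauss (int m - int r + int s) (int d - int r) * gauss (int n - int s + int r - 1) (int d - int s - 1)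
    * qvar ^ (maj \<delta> + maj \<pi> + nat ((int d - int s) * (int d - int r))))"
    by (simp only: to_fract_gauss_mult_qvar_power[OF nonneg])
qed

lemma maj_gf_Sh_ls_closed_form:
  assumes "\<pi> \<noteq> []" "\<delta> \<noteq> []" "\<forall>u\<in>set \<delta>. \<forall>v\<in>set \<pi>. v < u"
    and "m = length \<delta>" "n = length \<pi>" "r = des \<delta>" "s = des \<pi>"
  shows "maj_gf (Sh_ls \<pi> \<delta>) (int d) =
    gauss (int m - int r + int s - 1) (int d - int r) * gauss (int n - int s + int r - 1) (int d - int s - 1)
    * qvar ^ (maj \<delta> + maj \<pi> + nat ((int d - int s) * (int d - int r)))"
proof (rule to_fract_eq_iff[THEN iffD1])
  have nonneg: "0 \<le> int d - int r \<Longrightarrow> 0 \<le> int d - int s - 1 \<Longrightarrow> 0 \<le> (int d - int s) * (int d - int r)"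
    by simp
  have "to_fract (maj_gf (Sh_ls \<pi> \<delta>) (int d)) = qf ^ (maj \<delta> + maj \<pi>) * gf_ls m n r s (int d)"
    using gf_Sh_ls_Sh_lp[OF assms(1-3)] assms(4-7) by simp
  then show "to_fract (maj_gf (Sh_ls \<pi> \<delta>) (int d)) = to_fract
    (gauss (int m - int r + int s - 1) (int d - int r) * gauss (int n - int s + int r - 1) (int d - int s - 1)
    * qvar ^ (maj \<delta> + maj \<pi> + nat ((int d - int s) * (int d - int r))))"
    by (simp only: to_fract_gauss_mult_qvar_power[OF nonneg] gf_ls_def)
qed

lemma maj_gf_Sh_ll_closed_form:
  assumes "\<pi> \<noteq> []" "\<delta> \<noteq> []" "\<forall>u\<in>set (a # \<delta>). \<forall>v\<in>set \<pi>. v < u" "a < hd \<delta>"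
    and "m = length (a # \<delta>)" "n = length \<pi>" "r = des (a # \<delta>)" "s = des \<pi>"
  shows "maj_gf (Sh_ll \<pi> (a # \<delta>)) (int d) =
    gauss (int m - int r + int s - 1) (int d - int r) * gauss (int n - int s + int r - 1) (int d - int s - 1)
    * qvar ^ (maj (a # \<delta>) + maj \<pi> + nat ((int d - int s + 1) * (int d - int r)))"
proof (rule to_fract_eq_iff[THEN iffD1])
  have nonneg: "0 \<le> int d - int r \<Longrightarrow> 0 \<le> int d - int s - 1 \<Longrightarrow> 0 \<le> (int d - int s + 1) * (int d - int r)"
    by simp
  have "a \<notin> set \<pi>"
    using assms(3) by auto
  have r: "r = des \<delta>" and maj: "maj (a # \<delta>) = maj \<delta> + r"
    using assms(2,4,7) by (simp_all add: des_Cons maj_Cons)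
  have "to_fract (maj_gf (Sh_ll \<pi> (a # \<delta>)) (int d))
      = qf ^ (maj \<delta> + maj \<pi>) * (qf ^ d * gf_ls m n r s (int d))"
    using gf_Sh_l[OF assms(1,2)] assms(3,5,6,8) r
    by (simp add: maj_gf_Sh_ll_Cons[OF assms(2) \<open>a \<notin> set \<pi>\<close> assms(4)] mult_ac)
  also have "\<dots> = qf ^ (maj (a # \<delta>) + maj \<pi>) *
      (to_fract (gauss (int m - int r + int s - 1) (int d - int r))
      * to_fract (gauss (int n - int s + int r - 1) (int d - int s - 1))
      * qf powi ((int d - int s + 1) * (int d - int r)))"
    using qf_power_mult_gf_ls[of d m n r s] by (simp add: maj power_add mult_ac)
  also have "\<dots> = to_fract
    (gauss (int m - int r + int s - 1) (int d - int r) * gauss (int n - int s + int r - 1) (int d - int s - 1)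
    * qvar ^ (maj (a # \<delta>) + maj \<pi> + nat ((int d - int s + 1) * (int d - int r))))"
    by (simp only: to_fract_gauss_mult_qvar_power[OF nonneg])
  finally show "to_fract (maj_gf (Sh_ll \<pi> (a # \<delta>)) (int d)) = \<dots>" .
qed

theorem theorem3p5:
  fixes \<pi> \<delta> :: "int list" and m n r s d :: nat
  assumes "distinct \<delta>" and "distinct \<pi>"
    and "length \<delta> = m" and "length \<pi> = n"
    and "m \<ge> 2" and "n \<ge> 1"
    and "set \<delta> \<inter> set \<pi> = {}"
    and "des \<delta> = r" and "des \<pi> = s"
    and "\<delta> ! 0 < \<delta> ! 1"
    and "\<forall>x\<in>set \<delta>. \<forall>y\<in>set \<pi>. y < x"
  shows
    "((\<Sum>\<alpha>\<in>{\<alpha>\<in>Sh_l \<pi> \<delta>. des \<alpha> = d}. qvar ^ maj \<alpha>) =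
       gauss (int m - int r + int s) (int d - int r) * gauss (int n - int s + int r - 1) (int d - int s - 1)
       * qvar ^ (maj \<delta> + maj \<pi> + nat ((int d - int s) * (int d - int r))))
  \<and>
    ((\<Sum>\<alpha>\<in>{\<alpha>\<in>Sh_ls \<pi> \<delta>. des \<alpha> = d}. qvar ^ maj \<alpha>) =
       gauss (int m - int r + int s - 1) (int d - int r) * gauss (int n - int s + int r - 1) (int d - int s - 1)
       * qvar ^ (maj \<delta> + maj \<pi> + nat ((int d - int s) * (int d - int r))))
  \<and>
    ((\<Sum>\<alpha>\<in>{\<alpha>\<in>Sh_ll \<pi> \<delta>. des \<alpha> = d}. qvar ^ maj \<alpha>) =
       gauss (int m - int r + int s - 1) (int d - int r) * gauss (int n - int s + int r - 1) (int d - int s - 1)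
       * qvar ^ (maj \<delta> + maj \<pi> + nat ((int d - int s + 1) * (int d - int r))))"
proof -
  have "\<pi> \<noteq> []" "\<delta> \<noteq> []"
    using assms(3-6) by auto
  obtain a \<delta>' where \<delta>: "\<delta> = a # \<delta>'" and "\<delta>' \<noteq> []" "a < hd \<delta>'"
    using assms(3,5,10) by (cases \<delta>; cases "tl \<delta>") auto
  have sum_eq: "(\<Sum>\<alpha>\<in>{\<alpha> \<in> A. des \<alpha> = d}. qvar ^ maj \<alpha>) = maj_gf A (int d)" for A
    by (simp add: maj_gf_def)
  show ?thesis
    unfolding sum_eq
    using maj_gf_Sh_l_closed_form[OF \<open>\<pi> \<noteq> []\<close> \<open>\<delta> \<noteq> []\<close> assms(11)]
      maj_gf_Sh_ls_closed_form[OF \<open>\<pi> \<noteq> []\<close> \<open>\<delta> \<noteq> []\<close> assms(11)]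
      maj_gf_Sh_ll_closed_form[OF \<open>\<pi> \<noteq> []\<close> \<open>\<delta>' \<noteq> []\<close> assms(11)[unfolded \<delta>] \<open>a < hd \<delta>'\<close>,
        folded \<delta>]
      assms(3,4,8,9)
    by simp
qed

end
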